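(* Let $\Phi$ be a Young function and $\varphi\in\mathcal{G}^{\rm dec}_1$. Then for every measurable $f$ on $\mathbb{R}^n$, \[ \|f\|_{\mathrm{w}\mathcal{M}_\Phi^\varphi}=\sup_{\lambda>0}\lambda\bigl\|\chi_{\{x\in\mathbb{R}^n:|f(x)|>\lambda\}}\bigr\|_{\mathcal{M}_\Phi^\varphi}. \]
   Context: A Young function is a convex $\Phi:[0,\infty)\to[0,\infty)$ with $\Phi(0)=0$, $\lim_{t\to\infty}\Phi(t)=\infty$. $\mathcal{G}^{\rm dec}_1$ is the set of $\varphi:(0,\infty)\to(0,\infty)$ that are almost decreasing (there is $C>0$ with $C\varphi(r)\ge\varphi(s)$ for $r<s$) and submultiplicative ($\varphi(rs)\le C\varphi(r)\varphi(s)$). For a ball $B=B(a,r)$: $\|f\|_{\Phi,B}=\inf\{\lambda>0:\frac1{|B|}\int_B\Phi(|f|/\lambda)\le1\}$ and $\|f\|_{\mathcal{M}_\Phi^\varphi}=\sup_{a,r}\frac1{\varphi(r)}\|f\|_{\Phi,B(a,r)}$. For measurable $A$, $f$ and $t>0$, $m(A,f,t)=|\{x\in A:|f(x)|>t\}|$. Define $\|f\|_{\Phi,B,\mathrm{weak}}=\inf\{\lambda>0:\sup_{t>0}\frac1{|B|}\Phi(t)\,m(B,f/\lambda,t)\le1\}$ and $\|f\|_{\mathrm{w}\mathcal{M}_\Phi^\varphi}=\sup_{a\in\mathbb{R}^n,r>0}\frac1{\varphi(r)}\|f\|_{\Phi,B(a,r),\mathrm{weak}}$. $\chi_E$ is the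 characteristic function of $E$. *)

theory Defs
  imports "HOL-Analysis.Analysis"
begin

definition young_function :: "(real \<Rightarrow> real) \<Rightarrow> bool" where
  "young_function \<Phi> \<longleftrightarrow> convex_on {0..} \<Phi> \<and> (\<forall>t\<ge>0. \<Phi> t \<ge> 0) \<and> \<Phi> 0 = 0
     \<and> filterlim \<Phi> at_top at_top"

definition G_dec_1 :: "(real \<Rightarrow> real) \<Rightarrow> bool" where
  "G_dec_1 \<phi> \<longleftrightarrow> (\<forall>r>0. \<phi> r > 0)
     \<and> (\<exists>C>0. \<forall>r s. 0 < r \<longrightarrow> r < s \<longrightarrow> C * \<phi> r \<ge> \<phi> s)
     \<and> (\<exists>C>0. \<forall>r>0. \<forall>s>0. \<phi> (r * s) \<le> C * \<phi> r * \<phi> s)"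

definition mdist :: "'a::euclidean_space set \<Rightarrow> ('a \<Rightarrow> real) \<Rightarrow> real \<Rightarrow> ennreal" where
  "mdist A f t = emeasure lebesgue {x \<in> A. \<bar>f x\<bar> > t}"

text \<open>Luxemburg-type average norm on a ball (value in [0,\<infinity>], Inf of empty set = \<infinity>).\<close>
definition orlicz_ball_norm :: "(real \<Rightarrow> real) \<Rightarrow> ('a::euclidean_space \<Rightarrow> real) \<Rightarrow> 'a set \<Rightarrow> ennreal" where
  "orlicz_ball_norm \<Phi> f B = (INF l\<in>{l::real. l > 0 \<and>
      ennreal (1 / measure lebesgue B) * (\<integral>\<^sup>+ x\<in>B. ennreal (\<Phi> (\<bar>f x\<bar> / l)) \<partial>lebesgue) \<le> 1}.
      ennreal l)"

definition weak_orlicz_ball_norm :: "(real \<Rightarrow> real) \<Rightarrow> ('a::euclidean_space \<Rightarrow> real) \<Rightarrow> 'a set \<Rightarrow> ennreal" where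
  "weak_orlicz_ball_norm \<Phi> f B = (INF l\<in>{l::real. l > 0 \<and>
      (SUP t\<in>{0<..}. ennreal (1 / measure lebesgue B) * ennreal (\<Phi> t) * mdist B (\<lambda>x. f x / l) t) \<le> 1}.
      ennreal l)"

definition morrey_orlicz_norm :: "(real \<Rightarrow> real) \<Rightarrow> (real \<Rightarrow> real) \<Rightarrow> ('a::euclidean_space \<Rightarrow> real) \<Rightarrow> ennreal" where
  "morrey_orlicz_norm \<Phi> \<phi> f = (SUP (a, r)\<in>UNIV \<times> {0<..}. ennreal (1 / \<phi> r) * orlicz_ball_norm \<Phi> f (ball a r))"

definition weak_morrey_orlicz_norm :: "(real \<Rightarrow> real) \<Rightarrow> (real \<Rightarrow> real) \<Rightarrow> ('a::euclidean_space \<Rightarrow> real) \<Rightarrow> ennreal" where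
  "weak_morrey_orlicz_norm \<Phi> \<phi> f = (SUP (a, r)\<in>UNIV \<times> {0<..}. ennreal (1 / \<phi> r) * weak_orlicz_ball_norm \<Phi> f (ball a r))"

end

theory Submission
  imports Defs
begin

text \<open>
  Everything happens on a single ball \<open>B\<close>. With \<open>g(s) = |B \<inter> {|f| > s}| / |B|\<close>, the
  Luxemburg norm of \<open>\<chi>{|f| > s}\<close> on \<open>B\<close> is the least \<open>\<mu>\<close> with \<open>\<Phi>(1/\<mu>) g(s) \<le> 1\<close>, while
  the weak norm of \<open>f\<close> on \<open>B\<close> is the least \<open>l\<close> with \<open>\<Phi>(t) g(l t) \<le> 1\<close> for all \<open>t > 0\<close>.
  The substitution \<open>s = l t\<close> and the monotonicity of \<open>\<Phi>\<close> identify the weak norm with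
  \<open>sup\<^sub>s s \<parallel>\<chi>{|f| > s}\<parallel>\<^sub>\<Phi>\<^sub>,\<^sub>B\<close>, for an arbitrary \<open>g\<close>. The supremum over balls then commutes
  with the supremum over \<open>s\<close>.
\<close>

lemma young_function_mono:
  assumes "young_function \<Phi>" "0 \<le> t" "t \<le> u"
  shows "\<Phi> t \<le> \<Phi> u"
proof (cases "u = 0")
  case True
  then show ?thesis using assms by simp
next
  case False
  with assms have u: "u > 0" by auto
  have convex: "convex_on {0..} \<Phi>" and zero: "\<Phi> 0 = 0" and nonneg: "\<Phi> u \<ge> 0"
    using assms u unfolding young_function_def by auto
  have "\<Phi> ((1 - t/u) *\<^sub>R 0 + (t/u) *\<^sub>R u) \<le> (1 - t/u) * \<Phi> 0 + (t/u) * \<Phi> u"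
    by (rule convex_onD[OF convex]) (use assms u in auto)
  also have "\<dots> = (t/u) * \<Phi> u"
    using zero by simp
  also have "\<dots> \<le> \<Phi> u"
    using nonneg u assms by (intro mult_left_le_one_le) auto
  finally show ?thesis using u by simp
qed

lemma nn_integral_young_indicator:
  assumes "young_function \<Phi>" "B \<in> sets lebesgue" "E \<in> sets lebesgue"
  shows "(\<integral>\<^sup>+ x\<in>B. ennreal (\<Phi> (\<bar>indicator E x :: real\<bar> / \<mu>)) \<partial>lebesgue)
       = ennreal (\<Phi> (1/\<mu>)) * emeasure lebesgue (B \<inter> E)"
proof -
  have "\<Phi> 0 = 0" using assms(1) unfolding young_function_def by simp
  then have "(\<integral>\<^sup>+ x\<in>B. ennreal (\<Phi> (\<bar>indicator E x :: real\<bar> / \<mu>)) \<partial>lebesgue)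
      = (\<integral>\<^sup>+ x. ennreal (\<Phi> (1/\<mu>)) * indicator (B \<inter> E) x \<partial>lebesgue)"
    by (intro nn_integral_cong) (auto simp: indicator_def)
  also have "\<dots> = ennreal (\<Phi> (1/\<mu>)) * emeasure lebesgue (B \<inter> E)"
    using assms by (intro nn_integral_cmult_indicator) auto
  finally show ?thesis .
qed

lemma weak_level_INF_eq_SUP_level_INF:
  fixes \<Phi> :: "real \<Rightarrow> real" and g :: "real \<Rightarrow> ennreal"
  assumes mono: "\<And>t u. 0 \<le> t \<Longrightarrow> t \<le> u \<Longrightarrow> \<Phi> t \<le> \<Phi> u"
  shows "(INF l\<in>{l. l > 0 \<and> (SUP t\<in>{0<..}. ennreal (\<Phi> t) * g (l * t)) \<le> 1}. ennreal l)
       = (SUP s\<in>{0<..}. ennreal s * (INF \<mu>\<in>{\<mu>. \<mu> > 0 \<and> ennreal (\<Phi> (1/\<mu>)) * g s \<le> 1}. ennreal \<mu>))"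
    (is "?W = (SUP s\<in>{0<..}. ennreal s * ?N s)")
proof (rule antisym)
  show "?W \<le> (SUP s\<in>{0<..}. ennreal s * ?N s)" (is "_ \<le> ?S")
  proof (rule dense_ge)
    fix y assume "?S < y"
    show "?W \<le> y"
    proof (cases y)
      case (real l)
      with \<open>?S < y\<close> have S_less: "?S < ennreal l" by simp
      then have "l > 0"
        using le_less_trans[OF zero_le S_less] by simp
      have "ennreal (\<Phi> t) * g (l * t) \<le> 1" if t: "t > 0" for t
      proof -
        define s where "s = l * t"
        have s: "s > 0" using t \<open>l > 0\<close> by (simp add: s_def)
        have "ennreal s * ?N s < ennreal s * ennreal (1/t)"
        proof -
          have "ennreal s * ?N s \<le> ?S" using s by (intro SUP_upper) simp
          also have "\<dots> < ennreal l" by (rule S_less)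
          also have "\<dots> = ennreal s * ennreal (1/t)"
            using t \<open>l > 0\<close> by (simp add: s_def flip: ennreal_mult)
          finally show ?thesis .
        qed
        then have "?N s < ennreal (1/t)"
          by (meson mult_left_mono not_le zero_le)
        then obtain \<mu> where \<mu>: "\<mu> > 0" "ennreal (\<Phi> (1/\<mu>)) * g s \<le> 1" "ennreal \<mu> < ennreal (1/t)"
          by (auto simp: INF_less_iff)
        then have "t \<le> 1/\<mu>"
          using t by (simp add: ennreal_less_iff field_simps)
        then have "ennreal (\<Phi> t) * g s \<le> ennreal (\<Phi> (1/\<mu>)) * g s"
          using t by (intro mult_right_mono ennreal_leI mono) auto
        with \<mu>(2) show ?thesis by (simp add: s_def)
      qed
      then show ?thesis
        unfolding real using \<open>l > 0\<close> by (intro INF_lower) (auto intro: SUP_least)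
    qed simp
  qed
next
  show "(SUP s\<in>{0<..}. ennreal s * ?N s) \<le> ?W"
  proof (intro SUP_least INF_greatest)
    fix s l :: real
    assume "s \<in> {0<..}" and "l \<in> {l. l > 0 \<and> (SUP t\<in>{0<..}. ennreal (\<Phi> t) * g (l * t)) \<le> 1}"
    then have s: "s > 0" and l: "l > 0"
      and admissible: "(SUP t\<in>{0<..}. ennreal (\<Phi> t) * g (l * t)) \<le> 1" by auto
    have "ennreal (\<Phi> (1/(l/s))) * g s \<le> 1"
      using order_trans[OF SUP_upper admissible, of "s/l"] s l by simp
    then have "?N s \<le> ennreal (l/s)"
      using s l by (intro INF_lower) auto
    then have "ennreal s * ?N s \<le> ennreal s * ennreal (l/s)"
      by (rule mult_left_mono) simp
    also have "\<dots> = ennreal l"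
      using s l by (simp flip: ennreal_mult)
    finally show "ennreal s * ?N s \<le> ennreal l" .
  qed
qed

lemma weak_orlicz_ball_norm_eq_SUP_level_sets:
  fixes f :: "'a::euclidean_space \<Rightarrow> real"
  assumes young: "young_function \<Phi>" and B: "B \<in> sets lebesgue"
    and f: "f \<in> borel_measurable lebesgue"
  shows "weak_orlicz_ball_norm \<Phi> f B =
    (SUP s\<in>{0<..}. ennreal s * orlicz_ball_norm \<Phi> (indicator {x. \<bar>f x\<bar> > s} :: 'a \<Rightarrow> real) B)"
proof -
  define g where "g s = ennreal (1 / measure lebesgue B) * emeasure lebesgue (B \<inter> {x. \<bar>f x\<bar> > s})"
    for s
  have level_set: "{x. \<bar>f x\<bar> > s} \<in> sets lebesgue" for s
    using borel_measurable_abs[OF f] by (simp add: borel_measurable_iff_greater)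
  have "mdist B (\<lambda>x. f x / l) t = emeasure lebesgue (B \<inter> {x. \<bar>f x\<bar> > l * t})" if "l > 0" for l t
  proof -
    have "{x \<in> B. \<bar>f x / l\<bar> > t} = B \<inter> {x. \<bar>f x\<bar> > l * t}"
      using that by (auto simp: abs_divide pos_less_divide_eq mult.commute)
    then show ?thesis unfolding mdist_def by simp
  qed
  then have weak: "weak_orlicz_ball_norm \<Phi> f B =
      (INF l\<in>{l. l > 0 \<and> (SUP t\<in>{0<..}. ennreal (\<Phi> t) * g (l * t)) \<le> 1}. ennreal l)"
    unfolding weak_orlicz_ball_norm_def g_def by (intro INF_cong) (auto simp: mult_ac)
  have strong: "orlicz_ball_norm \<Phi> (indicator {x. \<bar>f x\<bar> > s} :: 'a \<Rightarrow> real) B =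
      (INF \<mu>\<in>{\<mu>. \<mu> > 0 \<and> ennreal (\<Phi> (1/\<mu>)) * g s \<le> 1}. ennreal \<mu>)" for s
    unfolding orlicz_ball_norm_def g_def nn_integral_young_indicator[OF young B level_set]
    by (simp add: mult_ac)
  show ?thesis
    unfolding weak strong
    by (rule weak_level_INF_eq_SUP_level_INF) (rule young_function_mono[OF young])
qed

theorem lemma5p3:
  fixes \<Phi> \<phi> :: "real \<Rightarrow> real" and f :: "'a::euclidean_space \<Rightarrow> real"
  assumes "young_function \<Phi>" and "G_dec_1 \<phi>" and "f \<in> borel_measurable lebesgue"
  shows "weak_morrey_orlicz_norm \<Phi> \<phi> f =
    (SUP l\<in>{0<..}. ennreal l * morrey_orlicz_norm \<Phi> \<phi> (indicator {x. \<bar>f x\<bar> > l} :: 'a \<Rightarrow> real))"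
proof -
  define N where "N p s = orlicz_ball_norm \<Phi> (indicator {x. \<bar>f x\<bar> > s} :: 'a \<Rightarrow> real) (ball (fst p) (snd p))"
    for p s
  define c where "c p = ennreal (1 / \<phi> (snd p))" for p :: "'a \<times> real"
  have "weak_morrey_orlicz_norm \<Phi> \<phi> f = (SUP p\<in>UNIV \<times> {0<..}. c p * (SUP s\<in>{0<..}. ennreal s * N p s))"
    unfolding weak_morrey_orlicz_norm_def c_def N_def
    using weak_orlicz_ball_norm_eq_SUP_level_sets[OF assms(1) _ assms(3)] by (intro SUP_cong) auto
  also have "\<dots> = (SUP s\<in>{0<..}. SUP p\<in>UNIV \<times> {0<..}. ennreal s * (c p * N p s))"
    by (subst SUP_commute) (simp add: SUP_mult_left_ennreal mult.left_commute)
  also have "\<dots> = (SUP s\<in>{0<..}. ennreal s * (SUP p\<in>UNIV \<times> {0<..}. c p * N p s))"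
    by (simp add: SUP_mult_left_ennreal)
  also have "\<dots> = (SUP l\<in>{0<..}. ennreal l * morrey_orlicz_norm \<Phi> \<phi> (indicator {x. \<bar>f x\<bar> > l} :: 'a \<Rightarrow> real))"
    unfolding morrey_orlicz_norm_def c_def N_def by (simp add: case_prod_beta')
  finally show ?thesis .
qed

end
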